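(* Let $\mathcal{A}$ be a virtual orbifold atlas on a compact metrizable space $X$, indexed by a finite poset $\mathcal{I}$, for which the relation $\curlyvee$ is an equivalence relation. Order $\mathcal{I}$ as $\{I_1,\dots,I_m\}$ such that for each $k$, $I_k\preccurlyeq J$ implies $J\in\{I_k,I_{k+1},\dots,I_m\}$. For each $k$ let $|\mathcal{A}_k|$ be the quotient of $\bigsqcup_{i\ge k}U_{I_i}$ by the equivalence relation induced by $\curlyvee$, with the quotient topology. Then for each $k<m$ the natural map $|\mathcal{A}_{k+1}|\to|\mathcal{A}_k|$ is a homeomorphism onto an open subset.
   Context: A topological orbifold (possibly non-effective) and an orbifold vector bundle are defined via charts $(\tilde U,\Gamma,\varphi)$ with $\tilde U$ a topological manifold and $\Gamma$ a finite group acting continuously. A virtual orbifold chart on $X$ is $C=(U,E,S,\psi,F)$: $U$ an orbifold, $E\to U$ an orbifold vector bundle, $S$ a continuous section, $F\subset X$ open, $\psi:S^{-1}(0)\to F$ a homeomorphism. A coordinate change from $C_I$ to $C_J$ is $T_{JI}=(U_{JI},\phi_{JI},\widehat\phi_{JI})$: $U_{JI}\subset U_I$ open, $\phi_{JI}:U_{JI}\to U_J$ an orbifold embedding (continuous, homeomorphism onto its image, locally an equivariant locally flat embedding) covered by a fibrewise injective linear bundle embedding $\widehat\phi_{JI}$, intertwining sections and the maps $\psi$, with footprint $F_I\cap F_J$, satisfying a tangent bundle condition and the closedness condition (if $x_k\in U_{JI}\to x_\infty\in U_I$ and $\phi_{JI}(x_k)\to y_\infty$ then $x_\infty\in U_{JI}$,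 $y_\infty=\phi_{JI}(x_\infty)$). A virtual orbifold atlas: finite poset $(\mathcal{I},\preccurlyeq)$, charts $C_I$, coordinate changes $T_{JI}$ for $I\preccurlyeq J$, footprints covering $X$, cocycle condition $\widehat\phi_{KI}=\widehat\phi_{KJ}\circ\widehat\phi_{JI}$ on $U_{KI}\cap\phi_{JI}^{-1}(U_{KJ})$, and overlapping condition ($\overline{F_I}\cap\overline{F_J}\ne\emptyset\Rightarrow I\preccurlyeq J$ or $J\preccurlyeq I$). The relation $\curlyvee$ on $\bigsqcup_IU_I$: $x\in U_I$, $y\in U_J$ satisfy $x\curlyvee y$ iff ($I=J$, $x=y$) or ($I\preccurlyeq J$, $x\in U_{JI}$, $y=\phi_{JI}(x)$) or ($J\preccurlyeq I$, $y\in U_{IJ}$, $x=\phi_{IJ}(y)$). *)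

theory Defs
  imports "HOL-Analysis.Analysis"
begin

definition quotient_topology :: "'a topology \<Rightarrow> ('a \<times> 'a) set \<Rightarrow> 'a set topology" where
  "quotient_topology X R = topology (\<lambda>U. U \<subseteq> topspace X // R \<and> openin X (\<Union>U))"

text \<open>Topological data of a virtual orbifold chart C_I = (U_I, E_I, S_I, psi_I, F_I):
the (underlying space of the) orbifold U I, the zero set Z I = S_I^{-1}(0) (closed),
the homeomorphism psi I : Z I -> F I onto an open footprint F I of X.\<close>

definition virtual_chart_top ::
  "'x topology \<Rightarrow> 'a topology \<Rightarrow> 'a set \<Rightarrow> ('a \<Rightarrow> 'x) \<Rightarrow> 'x set \<Rightarrow> bool" where
  "virtual_chart_top X U Z psi F \<longleftrightarrow>
     Hausdorff_space U \<and> closedin U Z \<and> openin X F \<and>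
     homeomorphic_map (subtopology U Z) (subtopology X F) psi"

text \<open>Topological data of a coordinate change T_JI = (U_JI, phi_JI, hat phi_JI) from C_I
to C_J: U_JI open in U_I, phi_JI a topological embedding, intertwining the zero sets
(S_J o phi = hat phi o S_I with hat phi fibrewise injective, so phi^{-1}(Z_J) = U_JI \<inter> Z_I)
and the maps psi, footprint F_I \<inter> F_J, and the closedness condition.\<close>

definition coord_change_top ::
  "'a topology \<Rightarrow> 'a set \<Rightarrow> ('a \<Rightarrow> 'x) \<Rightarrow> 'x set \<Rightarrow>
   'a topology \<Rightarrow> 'a set \<Rightarrow> ('a \<Rightarrow> 'x) \<Rightarrow> 'x set \<Rightarrow>
   'a set \<Rightarrow> ('a \<Rightarrow> 'a) \<Rightarrow> bool" where
  "coord_change_top UI ZI psiI FI UJ ZJ psiJ FJ UJI phi \<longleftrightarrow>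
     openin UI UJI \<and>
     embedding_map (subtopology UI UJI) UJ phi \<and>
     (\<forall>x\<in>UJI. phi x \<in> ZJ \<longleftrightarrow> x \<in> ZI) \<and>
     (\<forall>x\<in>UJI \<inter> ZI. psiJ (phi x) = psiI x) \<and>
     psiI ` (UJI \<inter> ZI) = FI \<inter> FJ \<and>
     (\<forall>xs x y. (\<forall>n. xs n \<in> UJI) \<longrightarrow> limitin UI xs x sequentially \<longrightarrow>
        limitin UJ (phi \<circ> xs) y sequentially \<longrightarrow> x \<in> UJI \<and> y = phi x)"

text \<open>Topological data of a virtual orbifold atlas indexed by the finite poset (Iset, le).
UU J I stands for U_JI and phi J I for phi_JI.\<close>

definition virtual_atlas_top ::
  "'x topology \<Rightarrow> 'i set \<Rightarrow> ('i \<Rightarrow> 'i \<Rightarrow> bool) \<Rightarrow> ('i \<Rightarrow> 'a topology) \<Rightarrow> ('i \<Rightarrow> 'a set) \<Rightarrow>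
   ('i \<Rightarrow> 'a \<Rightarrow> 'x) \<Rightarrow> ('i \<Rightarrow> 'x set) \<Rightarrow> ('i \<Rightarrow> 'i \<Rightarrow> 'a set) \<Rightarrow> ('i \<Rightarrow> 'i \<Rightarrow> 'a \<Rightarrow> 'a) \<Rightarrow> bool" where
  "virtual_atlas_top X Iset le U Z psi F UU phi \<longleftrightarrow>
     finite Iset \<and>
     (\<forall>I\<in>Iset. le I I) \<and>
     (\<forall>I\<in>Iset. \<forall>J\<in>Iset. le I J \<and> le J I \<longrightarrow> I = J) \<and>
     (\<forall>I\<in>Iset. \<forall>J\<in>Iset. \<forall>K\<in>Iset. le I J \<and> le J K \<longrightarrow> le I K) \<and>
     (\<forall>I\<in>Iset. virtual_chart_top X (U I) (Z I) (psi I) (F I)) \<and>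
     (\<forall>I\<in>Iset. \<forall>J\<in>Iset. le I J \<longrightarrow>
        coord_change_top (U I) (Z I) (psi I) (F I) (U J) (Z J) (psi J) (F J) (UU J I) (phi J I)) \<and>
     (\<Union>I\<in>Iset. F I) = topspace X \<and>
     (\<forall>I\<in>Iset. \<forall>J\<in>Iset. \<forall>K\<in>Iset. le I J \<and> le J K \<longrightarrow>
        (\<forall>x\<in>UU K I \<inter> {x\<in>UU J I. phi J I x \<in> UU K J}. phi K I x = phi K J (phi J I x))) \<and>
     (\<forall>I\<in>Iset. \<forall>J\<in>Iset. X closure_of F I \<inter> X closure_of F J \<noteq> {} \<longrightarrow> le I J \<or> le J I)"

definition vee_rel ::
  "'i set \<Rightarrow> ('i \<Rightarrow> 'i \<Rightarrow> bool) \<Rightarrow> ('i \<Rightarrow> 'a topology) \<Rightarrow> ('i \<Rightarrow> 'i \<Rightarrow> 'a set) \<Rightarrow>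
   ('i \<Rightarrow> 'i \<Rightarrow> 'a \<Rightarrow> 'a) \<Rightarrow> (('i \<times> 'a) \<times> ('i \<times> 'a)) set" where
  "vee_rel Iset le U UU phi =
     {((I, x), (J, y)) | I x J y. I \<in> Iset \<and> J \<in> Iset \<and> x \<in> topspace (U I) \<and> y \<in> topspace (U J) \<and>
        ((I = J \<and> x = y) \<or> (le I J \<and> x \<in> UU J I \<and> y = phi J I x) \<or>
         (le J I \<and> y \<in> UU I J \<and> x = phi I J y))}"

text \<open>|A_k| for the ordering Is = [I_1,...,I_m] (0-based: k-th tail drop k Is):
quotient of the disjoint union of the U_I, I in drop k Is, by the restriction of curlyvee.\<close>

definition tail_quotient ::
  "'i list \<Rightarrow> nat \<Rightarrow> ('i \<Rightarrow> 'a topology) \<Rightarrow> (('i \<times> 'a) \<times> ('i \<times> 'a)) set \<Rightarrow> ('i \<times> 'a) set topology" where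
  "tail_quotient Is k U R =
     (let S = sum_topology U (set (drop k Is))
      in quotient_topology S (R \<inter> (topspace S \<times> topspace S)))"

definition tail_natural_map ::
  "'i list \<Rightarrow> nat \<Rightarrow> ('i \<Rightarrow> 'a topology) \<Rightarrow> (('i \<times> 'a) \<times> ('i \<times> 'a)) set \<Rightarrow> ('i \<times> 'a) set \<Rightarrow> ('i \<times> 'a) set" where
  "tail_natural_map Is k U R c =
     (let S = sum_topology U (set (drop k Is)) in (R \<inter> (topspace S \<times> topspace S)) `` c)"

end

(*
  Write A for the union of the charts U_J with J later than I = I_k, so that the tail
  quotient |A_{k+1}| is the quotient of the open subspace A of the disjoint union
  defining |A_k|.  For any equivalence relation, the map from the quotient of an open
  subspace A by the restricted relation into the full quotient is a continuous injection,
  and it is open as soon as the saturation of every open, A-saturated subset of A is open.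
  In the disjoint union only the trace of such a saturation on the new component U_I needs
  checking.  Since I is minimal among the remaining indices, a point x of U_I is related to a
  point of a later chart U_J only via x in U_JI and phi_JI x, so this trace is the union of
  the preimages of open sets under the maps phi_JI, which are continuous on the open sets U_JI.
*)
theory Submission
  imports Defs
begin

lemma equiv_Restr: "equiv T R \<Longrightarrow> A \<subseteq> T \<Longrightarrow> equiv A (Restr R A)"
  unfolding equiv_def refl_on_def sym_def trans_def by blast

lemma istopology_quotient:
  assumes "equiv (topspace X) R"
  shows "istopology (\<lambda>W. W \<subseteq> topspace X // R \<and> openin X (\<Union>W))"
  unfolding istopology_def
proof (rule conjI; intro allI impI)
  fix V W assume V: "V \<subseteq> topspace X // R \<and> openin X (\<Union>V)"
    and W: "W \<subseteq> topspace X // R \<and> openin X (\<Union>W)"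
  have "\<Union>(V \<inter> W) = \<Union>V \<inter> \<Union>W"
    using V W quotient_disj[OF assms] by blast
  then show "V \<inter> W \<subseteq> topspace X // R \<and> openin X (\<Union>(V \<inter> W))"
    using V W by auto
next
  fix \<W> assume "\<forall>W\<in>\<W>. W \<subseteq> topspace X // R \<and> openin X (\<Union>W)"
  moreover have "\<Union>(\<Union>\<W>) = (\<Union>W\<in>\<W>. \<Union>W)"
    by blast
  ultimately show "\<Union>\<W> \<subseteq> topspace X // R \<and> openin X (\<Union>(\<Union>\<W>))"
    by (auto intro: openin_Union)
qed

lemma openin_quotient_topology:
  "equiv (topspace X) R \<Longrightarrow>
     openin (quotient_topology X R) W \<longleftrightarrow> W \<subseteq> topspace X // R \<and> openin X (\<Union>W)"
  by (simp add: quotient_topology_def istopology_quotient)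

lemma topspace_quotient_topology:
  assumes "equiv (topspace X) R"
  shows "topspace (quotient_topology X R) = topspace X // R"
proof -
  have "openin (quotient_topology X R) (topspace X // R)"
    by (simp add: openin_quotient_topology[OF assms] Union_quotient[OF assms])
  then show ?thesis
    using openin_quotient_topology[OF assms] openin_subset openin_topspace by blast
qed

lemma Image_Restr_class:
  assumes "equiv T R" "A \<subseteq> T" "p \<in> A"
  shows "R `` (Restr R A `` {p}) = R `` {p}"
  using assms unfolding equiv_def refl_on_def trans_def by blast

lemma Image_in_quotient_Restr:
  assumes "equiv T R" "A \<subseteq> T" "c \<in> A // Restr R A"
  shows "R `` c \<in> T // R"
  using assms Image_Restr_class by (fastforce elim!: quotientE intro: quotientI)

lemma inj_on_Image_quotient_Restr:
  assumes "equiv T R" "A \<subseteq> T"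
  shows "inj_on (Image R) (A // Restr R A)"
proof (rule inj_onI)
  fix c d assume "c \<in> A // Restr R A" "d \<in> A // Restr R A" "R `` c = R `` d"
  then obtain p q where "p \<in> A" "q \<in> A" "c = Restr R A `` {p}" "d = Restr R A `` {q}"
    "R `` {p} = R `` {q}"
    using Image_Restr_class[OF assms] by (metis quotientE)
  moreover from this have "(p, q) \<in> R"
    using eq_equiv_class[OF _ assms(1)] assms(2) by blast
  ultimately show "c = d"
    using equiv_class_eq[OF equiv_Restr[OF assms]] by blast
qed

lemma Union_quotient_Restr_saturated:
  assumes "equiv T R" "A \<subseteq> T" "W \<subseteq> A // Restr R A"
  shows "R `` \<Union>W \<inter> A \<subseteq> \<Union>W"
  using assms unfolding quotient_def equiv_def trans_def by blast

lemma Union_Image_preimage_quotient_Restr: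
  assumes "equiv T R" "A \<subseteq> T" "V \<subseteq> T // R"
  shows "\<Union>{c \<in> A // Restr R A. R `` c \<in> V} = \<Union>V \<inter> A"
proof
  show "\<Union>{c \<in> A // Restr R A. R `` c \<in> V} \<subseteq> \<Union>V \<inter> A"
  proof
    fix q assume "q \<in> \<Union>{c \<in> A // Restr R A. R `` c \<in> V}"
    then obtain p where p: "p \<in> A" "R `` {p} \<in> V" "q \<in> Restr R A `` {p}"
      using Image_Restr_class[OF assms(1,2)] by (auto elim!: quotientE)
    then show "q \<in> \<Union>V \<inter> A"
      by blast
  qed
  show "\<Union>V \<inter> A \<subseteq> \<Union>{c \<in> A // Restr R A. R `` c \<in> V}"
  proof
    fix q assume q: "q \<in> \<Union>V \<inter> A"
    then obtain D where "D \<in> V" "q \<in> D" by blast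
    then have "R `` {q} = D"
      using assms(3) equiv_class_eq[OF assms(1)] by (fastforce elim!: quotientE)
    moreover have "q \<in> Restr R A `` {q}"
      using q equiv_class_self[OF equiv_Restr[OF assms(1,2)]] by blast
    moreover have "Restr R A `` {q} \<in> A // Restr R A"
      using q by (blast intro: quotientI)
    ultimately show "q \<in> \<Union>{c \<in> A // Restr R A. R `` c \<in> V}"
      using q \<open>D \<in> V\<close> Image_Restr_class[OF assms(1,2)] by auto
  qed
qed

lemma quotient_topology_subtopology:
  assumes "equiv (topspace X) R" "A \<subseteq> topspace X"
  shows "topspace (quotient_topology (subtopology X A) (Restr R A)) = A // Restr R A"
    and "openin (quotient_topology (subtopology X A) (Restr R A)) W \<longleftrightarrow>
           W \<subseteq> A // Restr R A \<and> openin (subtopology X A) (\<Union>W)"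
proof -
  have "topspace (subtopology X A) = A"
    using assms(2) by auto
  moreover have "equiv A (Restr R A)"
    using assms by (rule equiv_Restr)
  ultimately show "topspace (quotient_topology (subtopology X A) (Restr R A)) = A // Restr R A"
    and "openin (quotient_topology (subtopology X A) (Restr R A)) W \<longleftrightarrow>
           W \<subseteq> A // Restr R A \<and> openin (subtopology X A) (\<Union>W)"
    by (metis topspace_quotient_topology openin_quotient_topology)+
qed

lemma continuous_map_Image_quotient_subtopology:
  assumes "equiv (topspace X) R" "A \<subseteq> topspace X"
  shows "continuous_map (quotient_topology (subtopology X A) (Restr R A))
           (quotient_topology X R) (Image R)"
  unfolding continuous_map_def quotient_topology_subtopology(1)[OF assms]
proof (intro conjI allI impI)
  show "Image R \<in> A // Restr R A \<rightarrow> topspace (quotient_topology X R)"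
    using assms Image_in_quotient_Restr by (auto simp: topspace_quotient_topology)
next
  fix V assume "openin (quotient_topology X R) V"
  then have "V \<subseteq> topspace X // R" "openin X (\<Union>V)"
    using openin_quotient_topology[OF assms(1)] by auto
  then have "openin (subtopology X A) (\<Union>{c \<in> A // Restr R A. R `` c \<in> V})"
    by (simp add: Union_Image_preimage_quotient_Restr[OF assms] openin_subtopology_Int)
  then show "openin (quotient_topology (subtopology X A) (Restr R A))
               {c \<in> A // Restr R A. R `` c \<in> V}"
    by (simp add: quotient_topology_subtopology(2)[OF assms])
qed

lemma open_map_Image_quotient_subtopology:
  assumes "equiv (topspace X) R" "openin X A"
    and saturation_open: "\<And>B. openin X B \<Longrightarrow> B \<subseteq> A \<Longrightarrow> R `` B \<inter> A \<subseteq> B \<Longrightarrow> openin X (R `` B)"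
  shows "open_map (quotient_topology (subtopology X A) (Restr R A)) (quotient_topology X R) (Image R)"
  unfolding open_map_def
proof (intro allI impI)
  have A: "A \<subseteq> topspace X"
    using assms(2) by (rule openin_subset)
  fix W assume "openin (quotient_topology (subtopology X A) (Restr R A)) W"
  then have W: "W \<subseteq> A // Restr R A" "openin X (\<Union>W)"
    using quotient_topology_subtopology(2)[OF assms(1) A] openin_trans_full assms(2) by auto
  moreover have "\<Union>W \<subseteq> A"
    using W(1) Union_quotient[OF equiv_Restr[OF assms(1) A]] by blast
  ultimately have "openin X (R `` \<Union>W)"
    using saturation_open Union_quotient_Restr_saturated[OF assms(1) A W(1)] by simp
  moreover have "\<Union>(Image R ` W) = R `` \<Union>W"
    by blast
  moreover have "Image R ` W \<subseteq> topspace X // R"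
    using W(1) Image_in_quotient_Restr[OF assms(1) A] by blast
  ultimately show "openin (quotient_topology X R) (Image R ` W)"
    by (simp add: openin_quotient_topology[OF assms(1)])
qed

lemma open_embedding_Image_quotient_subtopology:
  assumes "equiv (topspace X) R" "openin X A"
    and "\<And>B. openin X B \<Longrightarrow> B \<subseteq> A \<Longrightarrow> R `` B \<inter> A \<subseteq> B \<Longrightarrow> openin X (R `` B)"
  shows "openin (quotient_topology X R)
           (Image R ` topspace (quotient_topology (subtopology X A) (Restr R A)))
       \<and> embedding_map (quotient_topology (subtopology X A) (Restr R A))
           (quotient_topology X R) (Image R)"
proof -
  have A: "A \<subseteq> topspace X"
    using assms(2) by (rule openin_subset)
  have "open_map (quotient_topology (subtopology X A) (Restr R A)) (quotient_topology X R) (Image R)"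
    using assms by (rule open_map_Image_quotient_subtopology)
  moreover have "continuous_map (quotient_topology (subtopology X A) (Restr R A))
                   (quotient_topology X R) (Image R)"
    using assms(1) A by (rule continuous_map_Image_quotient_subtopology)
  moreover have "inj_on (Image R) (topspace (quotient_topology (subtopology X A) (Restr R A)))"
    using inj_on_Image_quotient_Restr[OF assms(1) A]
    by (simp add: quotient_topology_subtopology(1)[OF assms(1) A])
  ultimately show ?thesis
    by (simp add: injective_open_imp_embedding_map open_map_def)
qed

lemma subtopology_sum_topology_subfamily:
  assumes "J \<subseteq> I"
  shows "subtopology (sum_topology X I) (Sigma J (topspace \<circ> X)) = sum_topology X J"
  unfolding topology_eq openin_subtopology
proof (intro allI iffI)
  fix B assume "\<exists>T. openin (sum_topology X I) T \<and> B = T \<inter> Sigma J (topspace \<circ> X)"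
  then obtain T where T: "openin (sum_topology X I) T" and B: "B = T \<inter> Sigma J (topspace \<circ> X)"
    by blast
  have "{x. (j, x) \<in> B} = {x. (j, x) \<in> T}" if "j \<in> J" for j
    using T that assms openin_subset unfolding B openin_sum_topology by fastforce
  then show "openin (sum_topology X J) B"
    using T assms unfolding B openin_sum_topology by auto
next
  fix B assume B: "openin (sum_topology X J) B"
  have "openin (X i) {x. (i, x) \<in> B}" if "i \<in> I" for i
  proof (cases "i \<in> J")
    case False
    then have "{x. (i, x) \<in> B} = {}"
      using B openin_subset by fastforce
    then show ?thesis
      by simp
  qed (use B in \<open>simp add: openin_sum_topology\<close>)
  then have "openin (sum_topology X I) B"
    using B assms unfolding openin_sum_topology by auto
  moreover have "B = B \<inter> Sigma J (topspace \<circ> X)"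
    using B openin_subset by fastforce
  ultimately show "\<exists>T. openin (sum_topology X I) T \<and> B = T \<inter> Sigma J (topspace \<circ> X)"
    by blast
qed

lemma openin_sum_topology_insert_Image:
  assumes R: "equiv (topspace (sum_topology U (insert i K))) R"
    and B: "openin (sum_topology U (insert i K)) B" "B \<subseteq> Sigma K (topspace \<circ> U)"
      "R `` B \<inter> Sigma K (topspace \<circ> U) \<subseteq> B"
    and "openin (U i) {x. (i, x) \<in> R `` B}"
  shows "openin (sum_topology U (insert i K)) (R `` B)"
  unfolding openin_sum_topology
proof (intro conjI ballI)
  show "R `` B \<subseteq> Sigma (insert i K) (topspace \<circ> U)"
    using equiv_type[OF R] by auto
next
  fix j assume j: "j \<in> insert i K"
  show "openin (U j) {x. (j, x) \<in> R `` B}"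
  proof (cases "j = i")
    case True
    then show ?thesis
      using assms(5) by simp
  next
    case False
    have "{x. (j, x) \<in> R `` B} = {x. (j, x) \<in> B}"
      using B(2,3) j False equiv_type[OF R] R unfolding equiv_def refl_on_def by fastforce
    then show ?thesis
      using B(1) j False unfolding openin_sum_topology by simp
  qed
qed

lemma quotient_sum_topology_insert_open_embedding:
  fixes U :: "'i \<Rightarrow> 'a topology" and i :: 'i and K :: "'i set"
  defines "X \<equiv> sum_topology U (insert i K)" and "Y \<equiv> sum_topology U K"
  assumes R: "equiv T R" "Sigma (insert i K) (topspace \<circ> U) \<subseteq> T"
    and slice_open: "\<And>B. openin Y B \<Longrightarrow> openin (U i) {x \<in> topspace (U i). (i, x) \<in> R `` B}"
  shows "openin (quotient_topology X (Restr R (topspace X)))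
           (Image (Restr R (topspace X)) ` topspace (quotient_topology Y (Restr R (topspace Y))))
       \<and> embedding_map (quotient_topology Y (Restr R (topspace Y)))
           (quotient_topology X (Restr R (topspace X))) (Image (Restr R (topspace X)))"
proof -
  define A where "A = Sigma K (topspace \<circ> U)"
  have A: "topspace Y = A" "A \<subseteq> topspace X"
    unfolding X_def Y_def A_def by auto
  have "Y = subtopology X A"
    unfolding X_def Y_def A_def by (rule subtopology_sum_topology_subfamily[symmetric]) auto
  have RX: "equiv (topspace X) (Restr R (topspace X))"
    using R by (simp add: X_def equiv_Restr)
  have A_open: "openin X A"
    unfolding X_def A_def openin_sum_topology by (cases "i \<in> K") auto
  have saturation_open: "openin X (Restr R (topspace X) `` B)"
    if B: "openin X B" "B \<subseteq> A" "Restr R (topspace X) `` B \<inter> A \<subseteq> B" for B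
  proof -
    have "openin Y B"
      using B \<open>Y = subtopology X A\<close> openin_open_subtopology[OF A_open] by simp
    moreover have "{x. (i, x) \<in> Restr R (topspace X) `` B} = {x \<in> topspace (U i). (i, x) \<in> R `` B}"
      using B(2) A(2) unfolding X_def by fastforce
    ultimately have "openin (U i) {x. (i, x) \<in> Restr R (topspace X) `` B}"
      using slice_open by simp
    then show ?thesis
      using openin_sum_topology_insert_Image[OF RX[unfolded X_def]] B unfolding X_def A_def by blast
  qed
  have "Restr (Restr R (topspace X)) A = Restr R (topspace Y)"
    using A by auto
  then show ?thesis
    using open_embedding_Image_quotient_subtopology[OF RX A_open saturation_open]
      \<open>Y = subtopology X A\<close> by simp
qed

lemma virtual_atlas_top_coord_change_open_continuous:
  assumes "virtual_atlas_top X Iset le U Z psi F UU phi" "I \<in> Iset" "J \<in> Iset" "le I J"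
  shows "openin (U I) (UU J I) \<and> continuous_map (subtopology (U I) (UU J I)) (U J) (phi J I)"
proof -
  have "coord_change_top (U I) (Z I) (psi I) (F I) (U J) (Z J) (psi J) (F J) (UU J I) (phi J I)"
    using assms unfolding virtual_atlas_top_def by blast
  then have "openin (U I) (UU J I)" "embedding_map (subtopology (U I) (UU J I)) (U J) (phi J I)"
    unfolding coord_change_top_def by blast+
  then show ?thesis
    by (meson embedding_map_def homeomorphic_imp_continuous_map continuous_map_in_subtopology)
qed

lemma openin_vee_rel_Image_slice:
  assumes "I \<in> Iset" "K \<subseteq> Iset" "I \<notin> K" "\<forall>J\<in>K. \<not> le J I"
    and coord_change: "\<And>J. J \<in> K \<Longrightarrow> le I J \<Longrightarrow>
           openin (U I) (UU J I) \<and> continuous_map (subtopology (U I) (UU J I)) (U J) (phi J I)"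
    and B: "openin (sum_topology U K) B"
  shows "openin (U I) {x \<in> topspace (U I). (I, x) \<in> vee_rel Iset le U UU phi `` B}"
proof -
  have B_sub: "B \<subseteq> Sigma K (topspace \<circ> U)"
    using B openin_subset by fastforce
  have "{x \<in> topspace (U I). (I, x) \<in> vee_rel Iset le U UU phi `` B}
      = (\<Union>J\<in>{J\<in>K. le I J}. {x \<in> topspace (subtopology (U I) (UU J I)). phi J I x \<in> {y. (J, y) \<in> B}})"
    (is "?lhs = ?rhs")
  proof
    show "?lhs \<subseteq> ?rhs"
    proof
      fix x assume "x \<in> ?lhs"
      then obtain J y where "(J, y) \<in> B" "((J, y), (I, x)) \<in> vee_rel Iset le U UU phi"
        by auto
      moreover from this have "J \<in> K" "J \<noteq> I"
        using B_sub assms(3) by auto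
      ultimately show "x \<in> ?rhs"
        using assms(4) unfolding vee_rel_def by auto
    qed
    show "?rhs \<subseteq> ?lhs"
      using B_sub assms(1,2) unfolding vee_rel_def by fastforce
  qed
  moreover have "openin (U I) {x \<in> topspace (subtopology (U I) (UU J I)). phi J I x \<in> {y. (J, y) \<in> B}}"
    if "J \<in> K" "le I J" for J
  proof -
    have "openin (U J) {y. (J, y) \<in> B}"
      using B that(1) by (simp add: openin_sum_topology)
    then have "openin (subtopology (U I) (UU J I))
                 {x \<in> topspace (subtopology (U I) (UU J I)). phi J I x \<in> {y. (J, y) \<in> B}}"
      using coord_change[OF that] openin_continuous_map_preimage by blast
    then show ?thesis
      using coord_change[OF that] openin_trans_full by blast
  qed
  ultimately show ?thesis
    by (auto intro!: openin_Union)
qed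

lemma not_le_nth_of_mem_drop_Suc:
  assumes "distinct Is" "\<forall>j < length Is. \<forall>J\<in>set Is. le (Is ! j) J \<longrightarrow> J \<in> set (drop j Is)"
    and "J \<in> set (drop (Suc k) Is)"
  shows "\<not> le J (Is ! k)"
proof
  assume le: "le J (Is ! k)"
  obtain i where i: "i < length (drop (Suc k) Is)" "drop (Suc k) Is ! i = J"
    using assms(3) by (meson in_set_conv_nth)
  define j where "j = Suc k + i"
  have j: "k < j" "j < length Is" "J = Is ! j"
    using i by (auto simp: j_def)
  then have "Is ! k \<in> set (drop j Is)"
    using assms(2) le by auto
  moreover have "Is ! k \<in> set (take j Is)"
    using j nth_mem[of k "take j Is"] by simp
  ultimately show False
    using set_take_disj_set_drop_if_distinct[OF assms(1), of j j] by blast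
qed

theorem lemma7p33:
  fixes X :: "'x topology" and Iset :: "'i set" and le :: "'i \<Rightarrow> 'i \<Rightarrow> bool"
    and U :: "'i \<Rightarrow> 'a topology" and Z :: "'i \<Rightarrow> 'a set" and psi :: "'i \<Rightarrow> 'a \<Rightarrow> 'x"
    and F :: "'i \<Rightarrow> 'x set" and UU :: "'i \<Rightarrow> 'i \<Rightarrow> 'a set" and phi :: "'i \<Rightarrow> 'i \<Rightarrow> 'a \<Rightarrow> 'a"
    and Is :: "'i list" and k :: nat
  assumes "compact_space X" and "metrizable_space X"
    and "virtual_atlas_top X Iset le U Z psi F UU phi"
    and "equiv (Sigma Iset (topspace \<circ> U)) (vee_rel Iset le U UU phi)"
    and "distinct Is" and "set Is = Iset"
    and "\<forall>j < length Is. \<forall>J\<in>Iset. le (Is ! j) J \<longrightarrow> J \<in> set (drop j Is)"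
    and "k + 1 < length Is"
  shows "openin (tail_quotient Is k U (vee_rel Iset le U UU phi))
           (tail_natural_map Is k U (vee_rel Iset le U UU phi) `
              topspace (tail_quotient Is (k + 1) U (vee_rel Iset le U UU phi)))
       \<and> embedding_map (tail_quotient Is (k + 1) U (vee_rel Iset le U UU phi))
           (tail_quotient Is k U (vee_rel Iset le U UU phi))
           (tail_natural_map Is k U (vee_rel Iset le U UU phi))"
proof -
  let ?R = "vee_rel Iset le U UU phi" and ?I = "Is ! k" and ?K = "set (drop (Suc k) Is)"
  have drop_k: "drop k Is = ?I # drop (Suc k) Is"
    using assms(8) by (simp add: Cons_nth_drop_Suc)
  then have I_K: "?I \<in> Iset" "?K \<subseteq> Iset" "?I \<notin> ?K"
    using assms(5,6,8) distinct_drop[OF assms(5), of k] by (auto dest: in_set_dropD)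
  have I_minimal: "\<forall>J\<in>?K. \<not> le J ?I"
    using not_le_nth_of_mem_drop_Suc[OF assms(5)] assms(6,7) by auto
  have slice_open: "openin (U ?I) {x \<in> topspace (U ?I). (?I, x) \<in> ?R `` B}"
    if "openin (sum_topology U ?K) B" for B
  proof (rule openin_vee_rel_Image_slice[where le = le, OF I_K I_minimal])
    show "openin (sum_topology U ?K) B"
      by (fact that)
  next
    fix J assume "J \<in> ?K" "le ?I J"
    then show "openin (U ?I) (UU J ?I)
                 \<and> continuous_map (subtopology (U ?I) (UU J ?I)) (U J) (phi J ?I)"
      using virtual_atlas_top_coord_change_open_continuous[OF assms(3) \<open>?I \<in> Iset\<close>] I_K(2) by blast
  qed
  have "Sigma (insert ?I ?K) (topspace \<circ> U) \<subseteq> Sigma Iset (topspace \<circ> U)"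
    using I_K by auto
  then show ?thesis
    using quotient_sum_topology_insert_open_embedding[where U = U and i = ?I, OF assms(4) _ slice_open]
    unfolding tail_quotient_def tail_natural_map_def Let_def drop_k by simp
qed

end
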